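(* Let $k\ge3$, let $G$ be a connected graph without isolated vertices, and let $u\in V(G)$. Let $G_u\bowtie K_k$ denote the graph obtained from the disjoint union of $G$ and a complete graph $K_k$ by identifying $u$ with a vertex of $K_k$. Then $G\in\mathcal F_{\chi,k}$ if and only if $G_u\bowtie K_k\in\mathcal F_{(k,2)}$.
   Context: All graphs are finite and simple. $\mathcal F_{\chi,k}$ is the class of graphs $G$ with $\chi(G)=k$ such that $\chi(H)<k$ for every proper subgraph $H$ of $G$ (for graphs without isolated vertices this is equivalent to $\chi(G-e)=k-1$ for every edge $e$). For a graph $G$, ${\rm es}_{\chi}(G)$ is the minimum number of edges of $G$ whose removal results in a spanning subgraph $G_1$ with $\chi(G_1)=\chi(G)-1$. $G$ is edge-stability critical if ${\rm es}_{\chi}(G-e)<{\rm es}_{\chi}(G)$ for every edge $e\in E(G)$. $\mathcal F_{(k,2)}$ is the class of $(k,2)$-critical graphs, i.e., edge-stability critical graphs $G$ with $\chi(G)=k$ and ${\rm es}_{\chi}(G)=2$. *)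

theory Defs
  imports Main
begin

definition graph :: "'a set \<Rightarrow> 'a set set \<Rightarrow> bool" where
  "graph V E \<longleftrightarrow> finite V \<and> (\<forall>e\<in>E. \<exists>x y. e = {x, y} \<and> x \<noteq> y \<and> x \<in> V \<and> y \<in> V)"

definition adj :: "'a set set \<Rightarrow> 'a \<Rightarrow> 'a \<Rightarrow> bool" where
  "adj E x y \<longleftrightarrow> {x, y} \<in> E"

definition connected_graph :: "'a set \<Rightarrow> 'a set set \<Rightarrow> bool" where
  "connected_graph V E \<longleftrightarrow> V \<noteq> {} \<and>
     (\<forall>x\<in>V. \<forall>y\<in>V. (x, y) \<in> {(a, b). adj E a b}\<^sup>*)"

definition no_isolated :: "'a set \<Rightarrow> 'a set set \<Rightarrow> bool" where
  "no_isolated V E \<longleftrightarrow> (\<forall>v\<in>V. \<exists>e\<in>E. v \<in> e)"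

definition colorable :: "'a set \<Rightarrow> 'a set set \<Rightarrow> nat \<Rightarrow> bool" where
  "colorable V E n \<longleftrightarrow> (\<exists>f :: 'a \<Rightarrow> nat. (\<forall>v\<in>V. f v < n) \<and>
      (\<forall>x y. {x, y} \<in> E \<longrightarrow> x \<noteq> y \<longrightarrow> f x \<noteq> f y))"

definition chi :: "'a set \<Rightarrow> 'a set set \<Rightarrow> nat" where
  "chi V E = (LEAST n. colorable V E n)"

definition subgraph :: "'a set \<Rightarrow> 'a set set \<Rightarrow> 'a set \<Rightarrow> 'a set set \<Rightarrow> bool" where
  "subgraph V' E' V E \<longleftrightarrow> V' \<subseteq> V \<and> E' \<subseteq> E \<and> (\<forall>e\<in>E'. e \<subseteq> V')"

definition F_chi :: "nat \<Rightarrow> 'a set \<Rightarrow> 'a set set \<Rightarrow> bool" where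
  "F_chi k V E \<longleftrightarrow> chi V E = k \<and>
     (\<forall>V' E'. subgraph V' E' V E \<and> (V', E') \<noteq> (V, E) \<longrightarrow> chi V' E' < k)"

definition es_chi :: "'a set \<Rightarrow> 'a set set \<Rightarrow> nat" where
  "es_chi V E = (LEAST m. \<exists>F. F \<subseteq> E \<and> card F = m \<and> chi V (E - F) = chi V E - 1)"

definition edge_stability_critical :: "'a set \<Rightarrow> 'a set set \<Rightarrow> bool" where
  "edge_stability_critical V E \<longleftrightarrow> (\<forall>e\<in>E. es_chi V (E - {e}) < es_chi V E)"

definition F_k2 :: "nat \<Rightarrow> 'a set \<Rightarrow> 'a set set \<Rightarrow> bool" where
  "F_k2 k V E \<longleftrightarrow> edge_stability_critical V E \<and> chi V E = k \<and> es_chi V E = 2"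

text \<open>G_u \<bowtie> K_k: vertices of G are tagged Inl, the k-1 new vertices of K_k
  are Inr 1, ..., Inr (k-1); the vertex of K_k identified with u is Inl u.\<close>

definition clique_part :: "'a \<Rightarrow> nat \<Rightarrow> ('a + nat) set" where
  "clique_part u k = insert (Inl u) (Inr ` {1..<k})"

definition join_V :: "'a set \<Rightarrow> nat \<Rightarrow> ('a + nat) set" where
  "join_V V k = Inl ` V \<union> Inr ` {1..<k}"

definition join_E :: "'a set set \<Rightarrow> 'a \<Rightarrow> nat \<Rightarrow> ('a + nat) set set" where
  "join_E E u k = (\<lambda>e. Inl ` e) ` E \<union>
     {{x, y} | x y. x \<in> clique_part u k \<and> y \<in> clique_part u k \<and> x \<noteq> y}"

end

theory Submission
  imports Defs "HOL-Combinatorics.Transposition"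
begin

(* The vertex u separates H = G_u \<bowtie> K_k into G and the clique part, so n-colourings of the two
   sides glue, after permuting colours, to n-colourings of H; hence
   chi(H - X) = max (chi(G - X\<^sub>G)) (chi(K_k - X\<^sub>K)) for every edge set X.  Deleting one clique
   edge lowers the clique side to k - 1, so chi(H) drops to k - 1 exactly when a clique edge is
   deleted and G is left (k - 1)-colourable.  If G is k-critical this needs one edge of G as
   well, which gives es(H) = 2 and, since a single deleted edge of either side can be completed
   by one edge of the other, edge-stability criticality.  Conversely es(H) = 2 forces chi(G) = k,
   and es(H - e) \<le> 1 for an edge e of G forces chi(G - e) < k. *)

lemma colorable_mono:
  "colorable V E n \<Longrightarrow> V' \<subseteq> V \<Longrightarrow> E' \<subseteq> E \<Longrightarrow> n \<le> m \<Longrightarrow> colorable V' E' m"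
  unfolding colorable_def by (meson order_less_le_trans subsetD)

lemma chi_le: "colorable V E n \<Longrightarrow> chi V E \<le> n"
  unfolding chi_def by (rule Least_le)

lemma colorable_iff_chi_le:
  assumes "colorable V E m"
  shows "colorable V E n \<longleftrightarrow> chi V E \<le> n"
proof
  assume "chi V E \<le> n"
  moreover have "colorable V E (chi V E)"
    unfolding chi_def using assms by (rule LeastI)
  ultimately show "colorable V E n"
    using colorable_mono[of V E "chi V E" V E n] by blast
qed (rule chi_le)

lemma chi_eqI: "(\<And>n. colorable V E n \<longleftrightarrow> m \<le> n) \<Longrightarrow> chi V E = m"
  unfolding chi_def by (rule Least_equality) auto

lemma chi_empty_edges_le_one: "chi V {} \<le> 1"
  by (rule chi_le) (auto simp: colorable_def)

lemma card_le_if_clique: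
  assumes "colorable V E n" "S \<subseteq> V"
    and "\<And>x y. x \<in> S \<Longrightarrow> y \<in> S \<Longrightarrow> x \<noteq> y \<Longrightarrow> {x, y} \<in> E"
  shows "card S \<le> n"
proof -
  obtain f where f: "\<forall>v\<in>V. f v < n" "\<forall>x y. {x, y} \<in> E \<longrightarrow> x \<noteq> y \<longrightarrow> f x \<noteq> f y"
    using assms(1) unfolding colorable_def by blast
  have "inj_on f S"
    using f(2) assms(3) unfolding inj_on_def by blast
  moreover have "f ` S \<subseteq> {..<n}"
    using f(1) assms(2) by auto
  ultimately show ?thesis
    using card_inj_on_le[of f S "{..<n}"] by simp
qed

lemma graph_edge_subset: "graph V E \<Longrightarrow> e \<in> E \<Longrightarrow> e \<subseteq> V"
  unfolding graph_def by auto

lemma graph_subset_edges: "graph V E \<Longrightarrow> E' \<subseteq> E \<Longrightarrow> graph V E'"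
  unfolding graph_def by blast

lemma graph_finite_edges: "graph V E \<Longrightarrow> finite E"
  using finite_subset[of E "Pow V"] graph_edge_subset unfolding graph_def by blast

lemma graph_colorable: "graph V E \<Longrightarrow> colorable V E (card V)"
proof -
  assume g: "graph V E"
  obtain h where h: "bij_betw h V {0..<card V}"
    using ex_bij_betw_finite_nat g unfolding graph_def by blast
  have "h x \<noteq> h y" if "{x, y} \<in> E" "x \<noteq> y" for x y
    using graph_edge_subset[OF g that(1)] that(2) h by (auto simp: bij_betw_def inj_on_def)
  moreover have "h v < card V" if "v \<in> V" for v
    using h that by (auto simp: bij_betw_def)
  ultimately show ?thesis
    unfolding colorable_def by blast
qed

lemma graph_colorable_iff: "graph V E \<Longrightarrow> colorable V E n \<longleftrightarrow> chi V E \<le> n"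
  using colorable_iff_chi_le graph_colorable by blast

lemma chi_mono: "graph V E \<Longrightarrow> V' \<subseteq> V \<Longrightarrow> E' \<subseteq> E \<Longrightarrow> chi V' E' \<le> chi V E"
  by (meson chi_le colorable_mono graph_colorable_iff order_refl)

lemma F_chi_iff_edge_critical:
  assumes g: "graph V E" and "no_isolated V E"
  shows "F_chi k V E \<longleftrightarrow> chi V E = k \<and> (\<forall>e\<in>E. chi V (E - {e}) < k)"
proof (intro iffI conjI ballI)
  fix e assume "F_chi k V E" "e \<in> E"
  moreover have "subgraph V (E - {e}) V E"
    unfolding subgraph_def using graph_edge_subset[OF g] by blast
  ultimately show "chi V (E - {e}) < k"
    unfolding F_chi_def by blast
next
  assume crit: "chi V E = k \<and> (\<forall>e\<in>E. chi V (E - {e}) < k)"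
  have "chi V' E' < k" if sub: "subgraph V' E' V E" and proper: "(V', E') \<noteq> (V, E)" for V' E'
  proof -
    have "E' \<noteq> E"
    proof
      assume "E' = E"
      then obtain v where "v \<in> V" "v \<notin> V'"
        using sub proper unfolding subgraph_def by auto
      then show False
        using \<open>E' = E\<close> sub \<open>no_isolated V E\<close> unfolding no_isolated_def subgraph_def by blast
    qed
    then obtain e where "e \<in> E" "E' \<subseteq> E - {e}"
      using sub unfolding subgraph_def by blast
    then have "chi V' E' \<le> chi V (E - {e})"
      using sub graph_subset_edges[OF g, of "E - {e}"] chi_mono unfolding subgraph_def by blast
    also have "\<dots> < k"
      using crit \<open>e \<in> E\<close> by blast
    finally show ?thesis .
  qed
  then show "F_chi k V E"
    using crit unfolding F_chi_def by blast
qed (simp add: F_chi_def)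

lemma es_chi_le:
  "F \<subseteq> E \<Longrightarrow> chi V (E - F) = chi V E - 1 \<Longrightarrow> es_chi V E \<le> card F"
  unfolding es_chi_def by (rule Least_le) blast

lemma es_chi_witness:
  assumes "F \<subseteq> E" "chi V (E - F) = chi V E - 1"
  obtains F' where "F' \<subseteq> E" "card F' = es_chi V E" "chi V (E - F') = chi V E - 1"
proof -
  have "\<exists>F'. F' \<subseteq> E \<and> card F' = es_chi V E \<and> chi V (E - F') = chi V E - 1"
    unfolding es_chi_def by (rule LeastI_ex) (use assms in blast)
  then show ?thesis
    using that by blast
qed

definition complete_edges :: "'a set \<Rightarrow> 'a set set" where
  "complete_edges S = {{x, y} | x y. x \<in> S \<and> y \<in> S \<and> x \<noteq> y}"

lemma doubleton_in_complete_edges_iff [simp]: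
  "{x, y} \<in> complete_edges S \<longleftrightarrow> x \<in> S \<and> y \<in> S \<and> x \<noteq> y"
  unfolding complete_edges_def by (auto simp: doubleton_eq_iff)

lemma complete_edges_subset: "e \<in> complete_edges S \<Longrightarrow> e \<subseteq> S"
  unfolding complete_edges_def by blast

lemma graph_complete_edges: "finite S \<Longrightarrow> graph S (complete_edges S)"
  unfolding graph_def complete_edges_def by blast

lemma colorable_complete_edges_iff:
  assumes "finite S"
  shows "colorable S (complete_edges S) n \<longleftrightarrow> card S \<le> n"
proof
  assume "card S \<le> n"
  then show "colorable S (complete_edges S) n"
    using graph_colorable[OF graph_complete_edges[OF assms]] by (rule colorable_mono[rotated 3]) auto
qed (auto intro: card_le_if_clique)

text \<open>Without the edge c = {p, q}, the clique minus q is coloured injectively and q repeats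
  the colour of p.\<close>

lemma colorable_complete_edges_minus_edge_iff:
  assumes "finite S" and c: "c \<in> complete_edges S"
  shows "colorable S (complete_edges S - {c}) n \<longleftrightarrow> card S - 1 \<le> n"
proof -
  obtain p q where pq: "c = {p, q}" "p \<in> S" "q \<in> S" "p \<noteq> q"
    using c unfolding complete_edges_def by blast
  have card_minus: "card (S - {x}) = card S - 1" if "x \<in> S" for x
    using assms(1) that by simp
  show ?thesis
  proof
    assume "colorable S (complete_edges S - {c}) n"
    then have "card (S - {p}) \<le> n"
      by (rule card_le_if_clique) (use pq in \<open>auto simp: doubleton_eq_iff\<close>)
    then show "card S - 1 \<le> n"
      using card_minus[OF pq(2)] by simp
  next
    assume n: "card S - 1 \<le> n"
    obtain h where h: "bij_betw h (S - {q}) {0..<card S - 1}"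
      using ex_bij_betw_finite_nat[of "S - {q}"] assms(1) card_minus[OF pq(3)] by auto
    define f where "f = h(q := h p)"
    have h_lt: "h w < card S - 1" if "w \<in> S - {q}" for w
      using h that by (auto simp: bij_betw_def)
    have "f v < n" if "v \<in> S" for v
      using that pq n h_lt[of v] h_lt[of p] by (auto simp: f_def)
    moreover have "f x \<noteq> f y" if xy: "{x, y} \<in> complete_edges S - {c}" "x \<noteq> y" for x y
    proof -
      have h_neq: "h a \<noteq> h b" if "a \<in> S - {q}" "b \<in> S - {q}" "a \<noteq> b" for a b
        using h that unfolding bij_betw_def by (meson inj_on_contraD)
      have "x \<in> S" "y \<in> S" "{x, y} \<noteq> {p, q}" "{x, y} \<noteq> {q, p}"
        using xy pq(1) by (auto simp: insert_commute)
      then show ?thesis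
        using xy(2) pq(2,4) h_neq[of p y] h_neq[of x p] h_neq[of x y] unfolding f_def
        by (cases "x = q"; cases "y = q") auto
    qed
    ultimately show "colorable S (complete_edges S - {c}) n"
      unfolding colorable_def by blast
  qed
qed

lemma chi_complete_edges: "finite S \<Longrightarrow> chi S (complete_edges S) = card S"
  by (rule chi_eqI) (rule colorable_complete_edges_iff)

lemma chi_complete_edges_minus_edge:
  "finite S \<Longrightarrow> c \<in> complete_edges S \<Longrightarrow> chi S (complete_edges S - {c}) = card S - 1"
  by (rule chi_eqI) (rule colorable_complete_edges_minus_edge_iff)

definition inl_edges :: "'a set set \<Rightarrow> ('a + 'b) set set" where
  "inl_edges E = (\<lambda>e. Inl ` e) ` E"

lemma doubleton_in_inl_edges_iff:
  "{x, y} \<in> inl_edges E \<longleftrightarrow> (\<exists>a b. x = Inl a \<and> y = Inl b \<and> {a, b} \<in> E)"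
proof
  assume "{x, y} \<in> inl_edges E"
  then obtain e where e: "e \<in> E" "{x, y} = Inl ` e"
    unfolding inl_edges_def by blast
  then obtain a b where ab: "x = Inl a" "y = Inl b"
    by (metis imageE insertI1 insertI2)
  then have "Inl ` e = Inl ` {a, b}"
    using e(2) by auto
  then have "e = {a, b}"
    by (rule inj_image_eq_iff[OF inj_Inl, THEN iffD1])
  then show "\<exists>a b. x = Inl a \<and> y = Inl b \<and> {a, b} \<in> E"
    using ab e(1) by blast
next
  assume "\<exists>a b. x = Inl a \<and> y = Inl b \<and> {a, b} \<in> E"
  then obtain a b where "{x, y} = Inl ` {a, b}" "{a, b} \<in> E"
    by auto
  then show "{x, y} \<in> inl_edges E"
    unfolding inl_edges_def by blast
qed

lemma inl_edges_Diff_singleton: "inl_edges (E - {e}) = inl_edges E - {Inl ` e}"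
proof -
  have "inj (\<lambda>e. Inl ` e :: ('a + 'b) set)"
    by (meson injI inj_Inl inj_image_eq_iff)
  then show ?thesis
    unfolding inl_edges_def by (simp add: image_set_diff)
qed

lemma finite_inl_edges: "finite E \<Longrightarrow> finite (inl_edges E)"
  unfolding inl_edges_def by simp

lemma card_clique_part: "1 \<le> k \<Longrightarrow> card (clique_part u k) = k"
  unfolding clique_part_def by (subst card_insert_disjoint) (auto simp: card_image)

lemma clique_part_subset_join_V: "u \<in> V \<Longrightarrow> clique_part u k \<subseteq> join_V V k"
  by (auto simp: clique_part_def join_V_def)

text \<open>Gluing at the cut vertex: the colours of G are permuted by the transposition that makes
  them agree with the clique colouring at u.\<close>

lemma colorable_join_iff:
  assumes u: "u \<in> V" and K: "\<forall>e\<in>K. e \<subseteq> clique_part u k"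
  shows "colorable (join_V V k) (inl_edges E \<union> K) n
    \<longleftrightarrow> colorable V E n \<and> colorable (clique_part u k) K n"
proof
  assume col: "colorable (join_V V k) (inl_edges E \<union> K) n"
  then obtain f where f_lt: "\<forall>v\<in>join_V V k. f v < n"
    and f_proper: "\<forall>x y. {x, y} \<in> inl_edges E \<union> K \<longrightarrow> x \<noteq> y \<longrightarrow> f x \<noteq> f y"
    unfolding colorable_def by blast
  have "colorable V E n"
    unfolding colorable_def
    using f_lt f_proper by (intro exI[of _ "f \<circ> Inl"]) (auto simp: join_V_def doubleton_in_inl_edges_iff)
  moreover have "colorable (clique_part u k) K n"
    using col by (rule colorable_mono) (use clique_part_subset_join_V[OF u] in auto)
  ultimately show "colorable V E n \<and> colorable (clique_part u k) K n" ..
next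
  assume "colorable V E n \<and> colorable (clique_part u k) K n"
  then obtain g h where g_lt: "\<forall>v\<in>V. g v < n"
    and g_proper: "\<forall>x y. {x, y} \<in> E \<longrightarrow> x \<noteq> y \<longrightarrow> g x \<noteq> g y"
    and h_lt: "\<forall>v\<in>clique_part u k. h v < n"
    and h_proper: "\<forall>x y. {x, y} \<in> K \<longrightarrow> x \<noteq> y \<longrightarrow> h x \<noteq> h y"
    unfolding colorable_def by blast
  define s where "s = transpose (g u) (h (Inl u))"
  define f where "f = case_sum (s \<circ> g) (h \<circ> Inr)"
  have u_C: "Inl u \<in> clique_part u k"
    by (simp add: clique_part_def)
  have f_clique: "f v = h v" if "v \<in> clique_part u k" for v
    using that unfolding clique_part_def f_def s_def by auto
  have "f v < n" if "v \<in> join_V V k" for v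
  proof (cases v)
    case (Inl a)
    then have "g a < n" "g u < n" "h (Inl u) < n"
      using that g_lt h_lt u u_C by (auto simp: join_V_def)
    then show ?thesis
      using Inl by (simp add: f_def s_def transpose_def)
  next
    case (Inr i)
    then have "v \<in> clique_part u k"
      using that by (auto simp: join_V_def clique_part_def)
    then show ?thesis
      using h_lt f_clique by simp
  qed
  moreover have "f x \<noteq> f y" if xy: "{x, y} \<in> inl_edges E \<union> K" "x \<noteq> y" for x y
  proof (cases "{x, y} \<in> K")
    case True
    then have "x \<in> clique_part u k" "y \<in> clique_part u k"
      using K by blast+
    moreover have "h x \<noteq> h y"
      using h_proper True xy(2) by blast
    ultimately show ?thesis
      using f_clique by simp
  next
    case False
    then obtain a b where ab: "x = Inl a" "y = Inl b" "{a, b} \<in> E"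
      using xy(1) by (auto simp: doubleton_in_inl_edges_iff)
    then have "g a \<noteq> g b"
      using g_proper xy(2) by blast
    then show ?thesis
      using ab by (simp add: f_def s_def inj_eq inj_transpose)
  qed
  ultimately show "colorable (join_V V k) (inl_edges E \<union> K) n"
    unfolding colorable_def by blast
qed

locale clique_join =
  fixes V :: "'a set" and E :: "'a set set" and u :: 'a and k :: nat
  assumes graph: "graph V E" and u_in_V: "u \<in> V" and two_le_k: "2 \<le> k"
begin

abbreviation W :: "('a + nat) set" where
  "W \<equiv> join_V V k"

abbreviation K :: "('a + nat) set set" where
  "K \<equiv> complete_edges (clique_part u k)"

lemma finite_clique_part: "finite (clique_part u k)"
  by (simp add: clique_part_def)

lemma join_E_eq: "join_E E u k = inl_edges E \<union> K"
  unfolding join_E_def inl_edges_def complete_edges_def ..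

lemma clique_edge_exists: obtains c where "c \<in> K"
proof
  show "{Inl u, Inr 1} \<in> K"
    using two_le_k by (simp add: clique_part_def)
qed

lemma Inl_image_notin_K: "Inl ` e \<notin> K"
proof
  assume "Inl ` e \<in> K"
  then obtain x y where "Inl ` e = {x, y}" "x \<in> clique_part u k" "y \<in> clique_part u k" "x \<noteq> y"
    unfolding complete_edges_def by blast
  then show False
    unfolding clique_part_def by (metis image_iff insertE insertI1 insertI2 sum.distinct(1))
qed

lemma K_edge_notin_inl_edges: "c \<in> K \<Longrightarrow> c \<notin> inl_edges E'"
  using Inl_image_notin_K unfolding inl_edges_def by blast

lemma chi_join:
  assumes "E' \<subseteq> E" "K' \<subseteq> K"
  shows "chi W (inl_edges E' \<union> K') = max (chi V E') (chi (clique_part u k) K')"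
proof (rule chi_eqI)
  fix n
  have "graph V E'" "graph (clique_part u k) K'"
    using assms graph graph_complete_edges[OF finite_clique_part] by (auto intro: graph_subset_edges)
  moreover have "\<forall>e\<in>K'. e \<subseteq> clique_part u k"
    using assms(2) complete_edges_subset by blast
  ultimately show "colorable W (inl_edges E' \<union> K') n \<longleftrightarrow> max (chi V E') (chi (clique_part u k) K') \<le> n"
    by (simp add: colorable_join_iff[OF u_in_V] graph_colorable_iff)
qed

lemma card_clique_part_eq: "card (clique_part u k) = k"
  using two_le_k by (simp add: card_clique_part)

lemma chi_join_K: "E' \<subseteq> E \<Longrightarrow> chi W (inl_edges E' \<union> K) = max (chi V E') k"
  using chi_join[of E' K] chi_complete_edges[OF finite_clique_part] card_clique_part_eq
  by simp

lemma chi_join_K_minus_edge: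
  "E' \<subseteq> E \<Longrightarrow> c \<in> K \<Longrightarrow> chi W (inl_edges E' \<union> (K - {c})) = max (chi V E') (k - 1)"
  using chi_join[of E' "K - {c}"] chi_complete_edges_minus_edge[OF finite_clique_part]
    card_clique_part_eq
  by simp

lemma chi_V_less_if_chi_join_minus_less:
  assumes "E' \<subseteq> E" "F \<subseteq> inl_edges E' \<union> K" "card F \<le> 1"
    and less: "chi W (inl_edges E' \<union> K - F) < k"
  shows "chi V E' < k"
proof -
  have "finite (inl_edges E')"
    using finite_subset[OF assms(1) graph_finite_edges[OF graph]] by (rule finite_inl_edges)
  moreover have "finite K"
    by (rule graph_finite_edges[OF graph_complete_edges[OF finite_clique_part]])
  ultimately have "finite F"
    using assms(2) by (meson finite_UnI rev_finite_subset)
  moreover have "card F = 0 \<or> card F = 1"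
    using assms(3) by linarith
  ultimately consider "F = {}" | f where "F = {f}"
    by (auto simp: card_1_singleton_iff)
  then show ?thesis
  proof cases
    case 1
    then show ?thesis
      using less chi_join_K[OF assms(1)] by simp
  next
    case (2 f)
    show ?thesis
    proof (cases "f \<in> K")
      case True
      then have "inl_edges E' \<union> K - F = inl_edges E' \<union> (K - {f})"
        using 2 K_edge_notin_inl_edges by blast
      then show ?thesis
        using less chi_join_K_minus_edge[OF assms(1) True] by simp
    next
      case False
      then obtain e where "e \<in> E'" "f = Inl ` e"
        using 2 assms(2) unfolding inl_edges_def by blast
      then have "inl_edges E' \<union> K - F = inl_edges (E' - {e}) \<union> K"
        using 2 False inl_edges_Diff_singleton[of E' e] by blast
      moreover have "E' - {e} \<subseteq> E"
        using assms(1) by blast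
      ultimately show ?thesis
        using less chi_join_K[of "E' - {e}"] by simp
    qed
  qed
qed

context
  assumes chi_E: "chi V E = k" and critical: "\<forall>e\<in>E. chi V (E - {e}) < k"
begin

lemma chi_join_critical: "chi W (join_E E u k) = k"
  using chi_join_K[of E] chi_E by (simp add: join_E_eq)

lemma chi_join_minus_inl_edge:
  assumes "e \<in> E"
  shows "chi W (inl_edges (E - {e}) \<union> K) = k"
proof -
  have "chi V (E - {e}) < k"
    using critical assms by blast
  then show ?thesis
    using chi_join_K[of "E - {e}"] by simp
qed

lemma chi_join_minus_K_edge: "c \<in> K \<Longrightarrow> chi W (inl_edges E \<union> (K - {c})) = k"
  using chi_join_K_minus_edge[OF subset_refl] chi_E two_le_k by simp

lemma chi_join_minus_both_edges:
  assumes "e \<in> E" "c \<in> K"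
  shows "chi W (inl_edges (E - {e}) \<union> (K - {c})) = k - 1"
proof -
  have "chi V (E - {e}) < k"
    using critical assms(1) by blast
  then show ?thesis
    using chi_join_K_minus_edge[of "E - {e}" c] assms(2) by simp
qed

lemma es_chi_join_critical:
  assumes "e0 \<in> E"
  shows "es_chi W (join_E E u k) = 2"
proof -
  obtain c where c: "c \<in> K"
    by (rule clique_edge_exists)
  let ?F = "{Inl ` e0, c}"
  have F_J: "?F \<subseteq> join_E E u k"
    using assms c by (auto simp: join_E_eq inl_edges_def)
  have "join_E E u k - ?F = inl_edges (E - {e0}) \<union> (K - {c})"
    unfolding join_E_eq inl_edges_Diff_singleton using c K_edge_notin_inl_edges Inl_image_notin_K
    by blast
  then have F_drop: "chi W (join_E E u k - ?F) = chi W (join_E E u k) - 1"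
    using chi_join_minus_both_edges[OF assms c] chi_join_critical by simp
  have "Inl ` e0 \<noteq> c"
    using c Inl_image_notin_K by blast
  then have "es_chi W (join_E E u k) \<le> 2"
    using es_chi_le[OF F_J F_drop] by simp
  moreover have "\<not> es_chi W (join_E E u k) \<le> 1"
  proof
    assume le1: "es_chi W (join_E E u k) \<le> 1"
    obtain F where "F \<subseteq> join_E E u k" "card F = es_chi W (join_E E u k)"
      "chi W (join_E E u k - F) = chi W (join_E E u k) - 1"
      using es_chi_witness[OF F_J F_drop] .
    then show False
      using le1 chi_join_critical chi_E two_le_k chi_V_less_if_chi_join_minus_less[OF subset_refl, of F]
      by (simp add: join_E_eq)
  qed
  ultimately show ?thesis
    by simp
qed

lemma es_chi_join_minus_edge_critical:
  assumes "e0 \<in> E" "e \<in> join_E E u k"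
  shows "es_chi W (join_E E u k - {e}) \<le> 1"
proof -
  obtain c where c: "c \<in> K"
    by (rule clique_edge_exists)
  have drop_one: "es_chi W (join_E E u k - {e}) \<le> 1"
    if "x \<in> join_E E u k - {e}" "chi W (join_E E u k - {e}) = k"
      "chi W (join_E E u k - {e} - {x}) = k - 1" for x
    using es_chi_le[of "{x}" "join_E E u k - {e}" W] that by simp
  consider "e \<in> K" | e1 where "e1 \<in> E" "e = Inl ` e1"
    using assms(2) by (auto simp: join_E_eq inl_edges_def)
  then show ?thesis
  proof cases
    case 1
    have "join_E E u k - {e} = inl_edges E \<union> (K - {e})"
      "join_E E u k - {e} - {Inl ` e0} = inl_edges (E - {e0}) \<union> (K - {e})"
      unfolding join_E_eq inl_edges_Diff_singleton using 1 K_edge_notin_inl_edges Inl_image_notin_K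
      by blast+
    moreover have "Inl ` e0 \<in> join_E E u k - {e}"
      using 1 assms(1) Inl_image_notin_K by (auto simp: join_E_eq inl_edges_def)
    ultimately show ?thesis
      using chi_join_minus_K_edge[OF 1] chi_join_minus_both_edges[OF assms(1) 1] drop_one
      by simp
  next
    case 2
    have "join_E E u k - {e} = inl_edges (E - {e1}) \<union> K"
      "join_E E u k - {e} - {c} = inl_edges (E - {e1}) \<union> (K - {c})"
      unfolding join_E_eq inl_edges_Diff_singleton 2(2) using c K_edge_notin_inl_edges Inl_image_notin_K
      by blast+
    moreover have "c \<in> join_E E u k - {e}"
      using 2 c Inl_image_notin_K by (auto simp: join_E_eq)
    ultimately show ?thesis
      using chi_join_minus_inl_edge[OF 2(1)] chi_join_minus_both_edges[OF 2(1) c] drop_one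
      by simp
  qed
qed

lemma F_k2_join_if_critical: "E \<noteq> {} \<Longrightarrow> F_k2 k W (join_E E u k)"
  using chi_join_critical es_chi_join_critical es_chi_join_minus_edge_critical
  unfolding F_k2_def edge_stability_critical_def by fastforce

end

context
  assumes F_k2: "F_k2 k W (join_E E u k)"
begin

lemma chi_eq_if_F_k2_join: "chi V E = k"
proof (rule ccontr)
  assume "chi V E \<noteq> k"
  moreover have "max (chi V E) k = k"
    using F_k2 chi_join_K[of E] by (simp add: F_k2_def join_E_eq)
  ultimately have less: "chi V E < k"
    by simp
  obtain c where c: "c \<in> K"
    by (rule clique_edge_exists)
  have "join_E E u k - {c} = inl_edges E \<union> (K - {c})"
    unfolding join_E_eq using c K_edge_notin_inl_edges by blast
  then have "chi W (join_E E u k - {c}) = chi W (join_E E u k) - 1"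
    using chi_join_K_minus_edge[OF _ c, of E] less F_k2 by (simp add: F_k2_def)
  then have "es_chi W (join_E E u k) \<le> 1"
    using es_chi_le[of "{c}"] c by (simp add: join_E_eq)
  then show False
    using F_k2 by (simp add: F_k2_def)
qed

lemma chi_minus_edge_less_if_F_k2_join:
  assumes e: "e \<in> E"
  shows "chi V (E - {e}) < k"
proof -
  obtain c where c: "c \<in> K"
    by (rule clique_edge_exists)
  let ?J = "join_E E u k - {Inl ` e}"
  have J: "?J = inl_edges (E - {e}) \<union> K"
    unfolding join_E_eq inl_edges_Diff_singleton using Inl_image_notin_K by blast
  have "chi V (E - {e}) \<le> k"
    using chi_mono[OF graph subset_refl, of "E - {e}"] chi_eq_if_F_k2_join by auto
  then have chi_J: "chi W ?J = k"
    using J chi_join_K[of "E - {e}"] by (simp add: max_def)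
  have "Inl ` e \<in> join_E E u k"
    using e by (simp add: join_E_eq inl_edges_def)
  then have es_J: "es_chi W ?J \<le> 1"
    using F_k2 unfolding F_k2_def edge_stability_critical_def by fastforce
  \<comment> \<open>es_chi is a LEAST over a possibly empty set; this F shows it is attained\<close>
  let ?F = "inl_edges (E - {e}) \<union> {c}"
  have F_J: "?F \<subseteq> ?J"
    unfolding J using c by blast
  have "?J - ?F = inl_edges {} \<union> (K - {c})"
    unfolding J using c K_edge_notin_inl_edges by (auto simp: inl_edges_def)
  then have "chi W (?J - ?F) = chi W ?J - 1"
    using chi_join_K_minus_edge[OF _ c, of "{}"] chi_empty_edges_le_one[of V] chi_J two_le_k
    by (simp add: max_def)
  then obtain F where F: "F \<subseteq> ?J" "card F = es_chi W ?J" "chi W (?J - F) = chi W ?J - 1"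
    using es_chi_witness[OF F_J] by blast
  show ?thesis
  proof (rule chi_V_less_if_chi_join_minus_less[OF Diff_subset])
    show "F \<subseteq> inl_edges (E - {e}) \<union> K" "card F \<le> 1"
      using F(1,2) J es_J by simp_all
    show "chi W (inl_edges (E - {e}) \<union> K - F) < k"
      using F(3) J chi_J two_le_k by simp
  qed
qed

end

end

theorem theorem3p1:
  fixes V :: "'a set" and E :: "'a set set" and u :: 'a and k :: nat
  assumes "graph V E"
    and "k \<ge> 3"
    and "connected_graph V E"
    and "no_isolated V E"
    and "u \<in> V"
  shows "F_chi k V E \<longleftrightarrow> F_k2 k (join_V V k) (join_E E u k)"
proof -
  interpret clique_join V E u k
    using assms by unfold_locales auto
  have "E \<noteq> {}"
    using assms(4,5) unfolding no_isolated_def by blast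
  then show ?thesis
    unfolding F_chi_iff_edge_critical[OF assms(1,4)]
    using F_k2_join_if_critical chi_eq_if_F_k2_join chi_minus_edge_less_if_F_k2_join by blast
qed

end
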